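(* Let $B_i=(\underline{a}_i,\overline{a}_i)\times(\underline{b}_i,\overline{b}_i)\subset\mathbb{R}^2$, $i=1,\dots,N$, be rectangles, $d$ a positive integer, $p=\binom{d+2}{2}$. Let $$V(B_1,\dots,B_N)=\{f\in\mathbb{Z}[x,y]\mid \{(x,y):f(x,y)=0\}\cap B_i\neq\emptyset \text{ for all } i\}.$$ Let $\Delta_d:\mathbb{R}^{2p}\to\mathbb{R}$ be $\Delta_d(x_1,y_1,\dots,x_p,y_p)=\det M_d(x_1,y_1,\dots,x_p,y_p)$, where $M_d$ is the $p\times p$ matrix whose $i$-th column is $\mathbf{v}_d(x_i,y_i)$ and $\mathbf{v}_d$ is the vector of all $p$ monomials in $x,y$ of total degree at most $d$. If for at least one choice of indices $1\le j_1<j_2<\cdots<j_p\le N$ the function $\Delta_d$ is strictly positive at every point of $B_{j_1}\times\cdots\times B_{j_p}\subset\mathbb{R}^{2p}$, or strictly negative at every point of it, then $$\min\{\deg f\mid f\in V(B_1,\dots,B_N),\ f\neq0\}\ge d+1.$$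
   Context: $\mathbf{v}_d=[1,x,y,x^2,xy,y^2,\dots,x^d,\dots,y^d]^T$ and $\mathbf{v}_d(x_i,y_i)$ is its evaluation at $(x_i,y_i)$. *)

theory Defs
  imports "HOL-Computational_Algebra.Polynomial" "Jordan_Normal_Form.Determinant"
begin

text \<open>Bivariate integer polynomials Z[x,y] are represented as int poly poly,
  i.e. (Z[x])[y]: the outer variable is y, the coefficients are polynomials in x.\<close>

definition eval2 :: "int poly poly \<Rightarrow> real \<Rightarrow> real \<Rightarrow> real" where
  "eval2 f x y = poly (map_poly (\<lambda>q. poly (map_poly of_int q) x) f) y"

definition total_degree :: "int poly poly \<Rightarrow> nat" where
  "total_degree f = Max {i + degree (coeff f i) | i. coeff f i \<noteq> 0}"

text \<open>Exponent pairs (a,b) of the monomials x^a y^b of total degree at most d,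
  in the order 1, x, y, x^2, xy, y^2, ..., x^d, ..., y^d.\<close>
definition monomial_exps :: "nat \<Rightarrow> (nat \<times> nat) list" where
  "monomial_exps d = concat (map (\<lambda>k. map (\<lambda>j. (k - j, j)) [0..<Suc k]) [0..<Suc d])"

text \<open>Delta_d: determinant of the p x p matrix whose c-th column is v_d evaluated
  at the point pt c (points indexed 0..p-1), p = (d+2 choose 2).\<close>
definition Delta :: "nat \<Rightarrow> (nat \<Rightarrow> real \<times> real) \<Rightarrow> real" where
  "Delta d pt = det (mat ((d+2) choose 2) ((d+2) choose 2)
      (\<lambda>(r, c). fst (pt c) ^ fst (monomial_exps d ! r) * snd (pt c) ^ snd (monomial_exps d ! r)))"

definition in_box :: "(nat \<Rightarrow> real) \<Rightarrow> (nat \<Rightarrow> real) \<Rightarrow> (nat \<Rightarrow> real) \<Rightarrow> (nat \<Rightarrow> real)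
    \<Rightarrow> nat \<Rightarrow> real \<times> real \<Rightarrow> bool" where
  "in_box al ah bl bh i pt \<longleftrightarrow>
     al i < fst pt \<and> fst pt < ah i \<and> bl i < snd pt \<and> snd pt < bh i"

definition V :: "(nat \<Rightarrow> real) \<Rightarrow> (nat \<Rightarrow> real) \<Rightarrow> (nat \<Rightarrow> real) \<Rightarrow> (nat \<Rightarrow> real)
    \<Rightarrow> nat \<Rightarrow> int poly poly set" where
  "V al ah bl bh N = {f. \<forall>i\<in>{1..N}. \<exists>x y. in_box al ah bl bh i (x, y) \<and> eval2 f x y = 0}"

end

theory Submission
  imports Defs
begin

text \<open>If a nonzero f of total degree at most d vanished at one point of each of the p boxes
  B_j1, ..., B_jp, its coefficient vector, indexed by the monomials of degree at most d, would be
  a nonzero vector in the left kernel of M_d at these points, so Delta_d would vanish there,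
  contradicting its constant sign on the product of the boxes.\<close>

lemma length_monomial_exps: "length (monomial_exps d) = (d + 2) choose 2"
proof (induction d)
  case 0
  then show ?case by (simp add: monomial_exps_def numeral_2_eq_2)
next
  case (Suc d)
  have "monomial_exps (Suc d) = monomial_exps d @ map (\<lambda>j. (Suc d - j, j)) [0..<Suc (Suc d)]"
    by (simp add: monomial_exps_def)
  then have "length (monomial_exps (Suc d)) = ((d + 2) choose 2) + (d + 2)"
    using Suc by simp
  also have "\<dots> = (Suc d + 2) choose 2"
    by (simp add: numeral_2_eq_2 add.commute)
  finally show ?case .
qed

lemma set_monomial_exps: "set (monomial_exps d) = {(a, b). a + b \<le> d}"
proof
  show "set (monomial_exps d) \<subseteq> {(a, b). a + b \<le> d}"
    unfolding monomial_exps_def by auto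
  show "{(a, b). a + b \<le> d} \<subseteq> set (monomial_exps d)"
  proof clarify
    fix a b :: nat
    assume "a + b \<le> d"
    then have "(a, b) \<in> set (map (\<lambda>j. (a + b - j, j)) [0..<Suc (a + b)])"
      and "a + b \<in> set [0..<Suc d]"
      by (auto intro: image_eqI[of _ _ b])
    then show "(a, b) \<in> set (monomial_exps d)"
      unfolding monomial_exps_def by auto
  qed
qed

lemma distinct_monomial_exps: "distinct (monomial_exps d)"
  unfolding monomial_exps_def
proof (rule distinct_concat)
  let ?blocks = "map (\<lambda>k. map (\<lambda>j. (k - j, j)) [0..<Suc k]) [0..<Suc d]"
  show "distinct ?blocks"
    by (auto simp: distinct_map inj_on_def dest: map_eq_imp_length_eq)
  show "distinct ys" if "ys \<in> set ?blocks" for ys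
    using that by (auto simp: distinct_map inj_on_def)
  show "set ys \<inter> set zs = {}" if "ys \<in> set ?blocks" "zs \<in> set ?blocks" "ys \<noteq> zs" for ys zs
  proof -
    from that obtain k k' where ys: "ys = map (\<lambda>j. (k - j, j)) [0..<Suc k]"
      and zs: "zs = map (\<lambda>j. (k' - j, j)) [0..<Suc k']" and "k \<noteq> k'"
      by auto
    have "fst q + snd q = k" if "q \<in> set ys" for q
      using that unfolding ys by auto
    moreover have "fst q + snd q = k'" if "q \<in> set zs" for q
      using that unfolding zs by auto
    ultimately show ?thesis
      using \<open>k \<noteq> k'\<close> by fastforce
  qed
qed

lemma sum_monomial_exps:
  "(\<Sum>(a, b) \<in> {(a, b). a + b \<le> d}. g a b) =
   (\<Sum>r < (d + 2) choose 2. g (fst (monomial_exps d ! r)) (snd (monomial_exps d ! r)))"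
proof -
  let ?ms = "monomial_exps d"
  have "(\<Sum>(a, b) \<in> {(a, b). a + b \<le> d}. g a b) = sum_list (map (case_prod g) ?ms)"
    by (simp add: sum_list_distinct_conv_sum_set distinct_monomial_exps set_monomial_exps)
  also have "\<dots> = (\<Sum>r < length ?ms. case_prod g (?ms ! r))"
    by (simp add: sum_list_sum_nth atLeast0LessThan)
  finally show ?thesis
    by (simp add: length_monomial_exps case_prod_beta)
qed

lemma coeff_degree_le_total_degree:
  assumes "coeff f i \<noteq> 0"
  shows "i + degree (coeff f i) \<le> total_degree f"
proof -
  have "{i + degree (coeff f i) | i. coeff f i \<noteq> 0} \<subseteq> (\<lambda>i. i + degree (coeff f i)) ` {..degree f}"
    using le_degree by blast
  then have "finite {i + degree (coeff f i) | i. coeff f i \<noteq> 0}"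
    by (rule finite_subset) simp
  then show ?thesis
    unfolding total_degree_def using assms by (intro Max_ge) auto
qed

lemma poly_eq_sum_upto:
  fixes p :: "'a::comm_semiring_1 poly"
  assumes "degree p \<le> n"
  shows "poly p x = (\<Sum>i\<le>n. coeff p i * x ^ i)"
proof -
  have "poly p x = poly (\<Sum>i\<le>n. monom (coeff p i) i) x"
    by (simp add: poly_as_sum_of_monoms'[OF assms])
  also have "\<dots> = (\<Sum>i\<le>n. coeff p i * x ^ i)"
    by (simp add: poly_sum poly_monom)
  finally show ?thesis .
qed

lemma eval2_eq_sum_monomials:
  assumes "total_degree f \<le> d"
  shows "eval2 f x y = (\<Sum>(a, b) \<in> {(a, b). a + b \<le> d}. of_int (coeff (coeff f b) a) * x ^ a * y ^ b)"
proof -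
  have deg_coeff: "degree (coeff f b) \<le> d" for b
    using coeff_degree_le_total_degree[of f b] assms by (cases "coeff f b = 0") auto
  have deg: "degree f \<le> d"
    using coeff_degree_le_total_degree[of f "degree f"] assms by (cases "f = 0") auto
  have support: "a + b \<le> d" if "coeff (coeff f b) a \<noteq> 0" for a b
    using coeff_degree_le_total_degree[of f b] le_degree[of "coeff f b" a] assms that
    by fastforce
  let ?g = "\<lambda>a b. of_int (coeff (coeff f b) a) * x ^ a * y ^ b"
  define F where "F = map_poly (\<lambda>q. poly (map_poly (of_int :: int \<Rightarrow> real) q) x) f"
  have "degree F \<le> d"
    unfolding F_def using deg map_poly_degree_leq order.trans by blast
  then have "eval2 f x y = (\<Sum>b\<le>d. coeff F b * y ^ b)"
    unfolding eval2_def F_def[symmetric] by (rule poly_eq_sum_upto)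
  also have "\<dots> = (\<Sum>b\<le>d. poly (map_poly of_int (coeff f b)) x * y ^ b)"
    by (simp add: F_def coeff_map_poly)
  also have "\<dots> = (\<Sum>b\<le>d. \<Sum>a\<le>d. ?g a b)"
  proof (intro sum.cong refl)
    fix b
    have "degree (map_poly (of_int :: int \<Rightarrow> real) (coeff f b)) \<le> d"
      using deg_coeff map_poly_degree_leq order.trans by blast
    then show "poly (map_poly of_int (coeff f b)) x * y ^ b = (\<Sum>a\<le>d. ?g a b)"
      by (simp add: poly_eq_sum_upto[where n = d] coeff_map_poly sum_distrib_right)
  qed
  also have "\<dots> = (\<Sum>(a, b) \<in> {..d} \<times> {..d}. ?g a b)"
    by (subst sum.swap) (rule sum.cartesian_product)
  also have "\<dots> = (\<Sum>(a, b) \<in> {(a, b). a + b \<le> d}. ?g a b)"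
    using support by (intro sum.mono_neutral_right) auto
  finally show ?thesis .
qed

lemma Delta_eq_0_if_poly_vanishes:
  assumes "f \<noteq> 0" and "total_degree f \<le> d"
    and roots: "\<forall>c < (d + 2) choose 2. eval2 f (fst (pt c)) (snd (pt c)) = 0"
  shows "Delta d pt = 0"
proof -
  define p where "p = (d + 2) choose 2"
  define ms where "ms = monomial_exps d"
  define M where "M = mat p p (\<lambda>(r, c). fst (pt c) ^ fst (ms ! r) * snd (pt c) ^ snd (ms ! r))"
  define cv where "cv = vec p (\<lambda>r. real_of_int (coeff (coeff f (snd (ms ! r))) (fst (ms ! r))))"
  have M: "M \<in> carrier_mat p p"
    unfolding M_def by simp
  have "transpose_mat M *\<^sub>v cv = 0\<^sub>v p"
  proof (rule eq_vecI)
    fix c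
    assume "c < dim_vec (0\<^sub>v p :: real vec)"
    then have c: "c < p" by simp
    have "(transpose_mat M *\<^sub>v cv) $ c = (\<Sum>r < p. cv $ r * fst (pt c) ^ fst (ms ! r) * snd (pt c) ^ snd (ms ! r))"
      using c M by (auto simp: scalar_prod_def M_def cv_def mult.commute intro!: sum.cong)
    also have "\<dots> = eval2 f (fst (pt c)) (snd (pt c))"
      unfolding eval2_eq_sum_monomials[OF assms(2)] sum_monomial_exps p_def ms_def cv_def
      by (intro sum.cong) auto
    finally show "(transpose_mat M *\<^sub>v cv) $ c = 0\<^sub>v p $ c"
      using roots c by (simp add: p_def)
  qed (simp add: M_def)
  moreover have "cv \<noteq> 0\<^sub>v p"
  proof -
    obtain b where b: "coeff f b \<noteq> 0"
      using \<open>f \<noteq> 0\<close> leading_coeff_0_iff by blast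
    define a where "a = degree (coeff f b)"
    have "(a, b) \<in> set ms"
      using coeff_degree_le_total_degree[OF b] assms(2)
      unfolding ms_def set_monomial_exps a_def by simp
    then obtain r where "r < p" "ms ! r = (a, b)"
      by (metis in_set_conv_nth length_monomial_exps ms_def p_def)
    moreover have "coeff (coeff f b) a \<noteq> 0"
      unfolding a_def using b by simp
    ultimately have "cv $ r \<noteq> 0"
      by (simp add: cv_def)
    then show ?thesis
      using \<open>r < p\<close> by auto
  qed
  moreover have "cv \<in> carrier_vec p"
    unfolding cv_def by simp
  ultimately have "det (transpose_mat M) = 0"
    using det_0_iff_vec_prod_zero[of "transpose_mat M" p] M by auto
  then have "det M = 0"
    using det_transpose[OF M] by simp
  then show ?thesis
    unfolding Delta_def M_def p_def ms_def .
qed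

theorem corollary4:
  fixes al ah bl bh :: "nat \<Rightarrow> real" and N d :: nat
  assumes "d > 0"
    and "\<exists>j :: nat \<Rightarrow> nat. strict_mono_on {..<((d+2) choose 2)} j
           \<and> (\<forall>i < (d+2) choose 2. 1 \<le> j i \<and> j i \<le> N)
           \<and> ((\<forall>pt. (\<forall>i < (d+2) choose 2. in_box al ah bl bh (j i) (pt i)) \<longrightarrow> Delta d pt > 0)
              \<or> (\<forall>pt. (\<forall>i < (d+2) choose 2. in_box al ah bl bh (j i) (pt i)) \<longrightarrow> Delta d pt < 0))"
  shows "\<forall>f \<in> V al ah bl bh N. f \<noteq> 0 \<longrightarrow> total_degree f \<ge> d + 1"
proof (intro ballI impI)
  fix f
  assume "f \<in> V al ah bl bh N" and "f \<noteq> 0"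
  obtain j where j: "\<forall>i < (d+2) choose 2. 1 \<le> j i \<and> j i \<le> N"
    and sign: "(\<forall>pt. (\<forall>i < (d+2) choose 2. in_box al ah bl bh (j i) (pt i)) \<longrightarrow> Delta d pt > 0)
              \<or> (\<forall>pt. (\<forall>i < (d+2) choose 2. in_box al ah bl bh (j i) (pt i)) \<longrightarrow> Delta d pt < 0)"
    using assms(2) by blast
  have "\<forall>i < (d+2) choose 2. \<exists>q. in_box al ah bl bh (j i) q \<and> eval2 f (fst q) (snd q) = 0"
    using \<open>f \<in> V al ah bl bh N\<close> j unfolding V_def by fastforce
  then obtain pt where pt: "\<forall>i < (d+2) choose 2.
      in_box al ah bl bh (j i) (pt i) \<and> eval2 f (fst (pt i)) (snd (pt i)) = 0"
    by metis
  have "Delta d pt \<noteq> 0"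
    using sign pt by fastforce
  then show "total_degree f \<ge> d + 1"
    using Delta_eq_0_if_poly_vanishes[of f d pt] \<open>f \<noteq> 0\<close> pt by fastforce
qed

end
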